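(* Let $w\in[0,\infty)^n$ and $c\in(0,\infty)^n$. Let $x,y,z$ be tuples of vertices such that the concatenations $xy$ and $xyz$ are both searches in $\mathcal G$, and suppose $\rho(z)\ge\rho(y)$. Then $$J^+(xy;w,c)\ge\min\{J^+(x;w,c),\,J^+(xyz;w,c)\}.$$
   Context: $\mathcal G=([n],\mathcal E)$ is a finite directed acyclic graph on $[n]$. A search is a tuple $s=(s_1,\dots,s_k)$ of distinct vertices ($0\le k\le n$) such that every in-neighbor of each $s_i$ belongs to $\{s_1,\dots,s_{i-1}\}$. For tuples $a,b$ with disjoint entries, $ab$ denotes their concatenation. For $w\in[0,\infty)^n$, $c\in(0,\infty)^n$ and a tuple $s$ of distinct vertices: $J(s;w,c)=\big(\sum_{i=1}^{|s|}c_{s_i}(1-\sum_{j<i}w_{s_j})\big)/\big(\sum_{i=1}^{|s|}w_{s_i}\big)$ if the denominator is positive and $+\infty$ otherwise (in particular for the empty tuple); $J^+=\max\{0,J\}$ with $\max\{0,+\infty\}=+\infty$. The density of a tuple (or set) is $\rho(A)=\sum_{i\in A}w_i/\sum_{i\in A}c_i$ for nonempty $A$ (taken over its underlying set) and $\rho(\emptyset)=0$. *)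

theory Defs
  imports "HOL-Library.Extended_Real"
begin

text \<open>A finite DAG on the vertex set [n] = {1..n}: edge relation E (pairs (u,v) meaning u -> v).\<close>
definition is_dag :: "nat \<Rightarrow> (nat \<times> nat) set \<Rightarrow> bool" where
  "is_dag n E \<longleftrightarrow> E \<subseteq> {1..n} \<times> {1..n} \<and> acyclic E"

definition is_search :: "nat \<Rightarrow> (nat \<times> nat) set \<Rightarrow> nat list \<Rightarrow> bool" where
  "is_search n E s \<longleftrightarrow> distinct s \<and> set s \<subseteq> {1..n} \<and>
     (\<forall>i < length s. \<forall>u. (u, s ! i) \<in> E \<longrightarrow> u \<in> set (take i s))"

definition J :: "nat list \<Rightarrow> (nat \<Rightarrow> real) \<Rightarrow> (nat \<Rightarrow> real) \<Rightarrow> ereal" where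
  "J s w c = (let den = (\<Sum>i<length s. w (s ! i)) in
     if den > 0 then
       ereal ((\<Sum>i<length s. c (s ! i) * (1 - (\<Sum>j<i. w (s ! j)))) / den)
     else \<infinity>)"

definition Jplus :: "nat list \<Rightarrow> (nat \<Rightarrow> real) \<Rightarrow> (nat \<Rightarrow> real) \<Rightarrow> ereal" where
  "Jplus s w c = max 0 (J s w c)"

definition rho :: "nat list \<Rightarrow> (nat \<Rightarrow> real) \<Rightarrow> (nat \<Rightarrow> real) \<Rightarrow> real" where
  "rho s w c = (if s = [] then 0 else (\<Sum>i\<in>set s. w i) / (\<Sum>i\<in>set s. c i))"

end

theory Submission
  imports Defs
begin

text \<open>Let N(s, a) = sum_i c(s_i) (a - sum_{j<i} w(s_j)), the numerator of J when a mass
  a remains before s starts; then J(s) = N(s, 1) / W(s) with W the total weight, and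
  N(xy, a) = N(x, a) + N(y, a - W(x)).  If J(xy) >= J(x) we are done.  Otherwise the mediant
  J(xy) lies below J(x) and hence above the ratio N(y, 1 - W(x)) / W(y) contributed by y.
  With t = 1 - W(xy) the remaining mass, N(y, 1 - W(x)) >= C(y) t and N(z, t) <= C(z) t, where
  C is the total cost.  So if t > 0 the density condition gives
  N(z, t) / W(z) <= t / rho(z) <= t / rho(y) <= N(y, 1 - W(x)) / W(y) <= J(xy),
  and if t <= 0 the numerator contributed by z is nonpositive.  Either way appending z
  cannot raise J+ above J+(xy).\<close>

fun search_cost :: "('a \<Rightarrow> real) \<Rightarrow> ('a \<Rightarrow> real) \<Rightarrow> 'a list \<Rightarrow> real \<Rightarrow> real" where
  "search_cost w c [] a = 0"
| "search_cost w c (v # s) a = c v * a + search_cost w c s (a - w v)"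

lemma sum_nth_eq_search_cost:
  "(\<Sum>i<length s. c (s ! i) * (a - (\<Sum>j<i. w (s ! j)))) = search_cost w c s a"
proof (induction s arbitrary: a)
  case Nil
  then show ?case by simp
next
  case (Cons v s)
  have "(\<Sum>i<length (v # s). c ((v # s) ! i) * (a - (\<Sum>j<i. w ((v # s) ! j))))
      = c v * a + (\<Sum>i<length s. c (s ! i) * ((a - w v) - (\<Sum>j<i. w (s ! j))))"
    by (simp add: sum.lessThan_Suc_shift diff_diff_eq del: sum.lessThan_Suc)
  then show ?case
    using Cons.IH by simp
qed

lemma J_eq_search_cost:
  "J s w c = (if sum_list (map w s) > 0
              then ereal (search_cost w c s 1 / sum_list (map w s)) else \<infinity>)"
  unfolding J_def Let_def sum_nth_eq_search_cost
  by (simp add: sum_list_sum_nth atLeast0LessThan)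

lemma search_cost_append:
  "search_cost w c (xs @ ys) a = search_cost w c xs a + search_cost w c ys (a - sum_list (map w xs))"
  by (induction xs arbitrary: a) (auto simp: algebra_simps)

lemma search_cost_ge:
  assumes "\<forall>v\<in>set s. 0 \<le> w v \<and> 0 \<le> c v"
  shows "sum_list (map c s) * (a - sum_list (map w s)) \<le> search_cost w c s a"
  using assms
proof (induction s arbitrary: a)
  case Nil
  then show ?case by simp
next
  case (Cons v s)
  have "0 \<le> sum_list (map w s)"
    using Cons.prems by (intro sum_list_nonneg) auto
  then have "c v * (a - w v - sum_list (map w s)) \<le> c v * a"
    using Cons.prems by (simp add: mult_left_mono)
  moreover have "sum_list (map c s) * (a - w v - sum_list (map w s)) \<le> search_cost w c s (a - w v)"
    using Cons by simp
  ultimately show ?case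
    by (simp add: algebra_simps)
qed

lemma search_cost_le:
  assumes "\<forall>v\<in>set s. 0 \<le> w v \<and> 0 \<le> c v"
  shows "search_cost w c s a \<le> sum_list (map c s) * a"
  using assms
proof (induction s arbitrary: a)
  case Nil
  then show ?case by simp
next
  case (Cons v s)
  have "0 \<le> sum_list (map c s)"
    using Cons.prems by (intro sum_list_nonneg) auto
  then have "sum_list (map c s) * (a - w v) \<le> sum_list (map c s) * a"
    using Cons.prems by (simp add: mult_left_mono)
  moreover have "search_cost w c s (a - w v) \<le> sum_list (map c s) * (a - w v)"
    using Cons by simp
  ultimately show ?case
    by (simp add: algebra_simps)
qed

lemma weight_cross_le_of_rho_le:
  assumes "distinct y" "distinct z"
    and "\<forall>v\<in>set (y @ z). 0 \<le> w v \<and> 0 < c v"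
    and "rho y w c \<le> rho z w c"
  shows "sum_list (map w y) * sum_list (map c z) \<le> sum_list (map w z) * sum_list (map c y)"
proof -
  have W: "sum_list (map w s) = (\<Sum>v\<in>set s. w v)" and C: "sum_list (map c s) = (\<Sum>v\<in>set s. c v)"
    if "s = y \<or> s = z" for s
    using that assms(1,2) by (auto simp: sum_list_distinct_conv_sum_set)
  have C_pos: "0 < (\<Sum>v\<in>set s. c v)" if "s = y \<or> s = z" "s \<noteq> []" for s
    using that assms(3) by (intro sum_pos) auto
  have W_nonneg: "0 \<le> (\<Sum>v\<in>set s. w v)" if "s = y \<or> s = z" for s
    using that assms(3) by (intro sum_nonneg) auto
  have C_nonneg: "0 \<le> (\<Sum>v\<in>set s. c v)" if "s = y \<or> s = z" for s
    using that assms(3) by (intro sum_nonneg) (auto intro: less_imp_le)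
  show ?thesis
  proof (cases "y = []")
    case True
    then show ?thesis
      using W_nonneg C_nonneg by (simp add: W C)
  next
    case y: False
    show ?thesis
    proof (cases "z = []")
      case True
      then have "(\<Sum>v\<in>set y. w v) = 0"
        using assms(4) y W_nonneg[of y] C_pos[of y]
        by (simp add: rho_def divide_le_0_iff)
      then show ?thesis
        using True by (simp add: W C)
    next
      case False
      then show ?thesis
        using assms(4) y C_pos[of y] C_pos[of z]
        by (simp add: rho_def W C divide_simps mult.commute)
    qed
  qed
qed

lemma tail_cost_cross_le:
  fixes X Y Z Cy Cz Nx Ny Nz t :: real
  assumes XY_pos: "0 < X + Y" and Y_nonneg: "0 \<le> Y" and Z_nonneg: "0 \<le> Z"
    and Cy_pos: "0 < Cy" and Cz_nonneg: "0 \<le> Cz"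
    and Ny_ge: "Cy * t \<le> Ny" and Nz_le: "Nz \<le> Cz * t"
    and density: "Y * Cz \<le> Z * Cy"
    and drop: "Ny * (X + Y) \<le> (Nx + Ny) * Y"
  shows "Nz \<le> 0 \<or> Nz * (X + Y) \<le> Z * (Nx + Ny)"
proof (cases "t \<le> 0")
  case True
  then show ?thesis
    using Cz_nonneg Nz_le by (meson mult_nonneg_nonpos order_trans)
next
  case False
  have Ny_pos: "0 < Ny"
    using False Cy_pos Ny_ge by (meson mult_pos_pos not_le order_less_le_trans)
  have Y_pos: "0 < Y"
  proof (rule ccontr)
    assume "\<not> 0 < Y"
    then have "Y = 0" using Y_nonneg by simp
    then have "0 < Ny * X" "Ny * X \<le> 0"
      using XY_pos drop Ny_pos by simp_all
    then show False by simp
  qed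
  have "Nz * ((X + Y) * Y) \<le> (Cz * t) * ((X + Y) * Y)"
    using XY_pos Nz_le Y_pos by (intro mult_right_mono) simp_all
  then have "Nz * (X + Y) * Y \<le> (Y * Cz) * (t * (X + Y))"
    by (simp add: algebra_simps)
  also have "\<dots> \<le> (Z * Cy) * (t * (X + Y))"
    using XY_pos density False by (intro mult_right_mono) simp_all
  also have "\<dots> = Z * (Cy * t * (X + Y))"
    by (simp add: algebra_simps)
  also have "\<dots> \<le> Z * ((Nx + Ny) * Y)"
  proof (intro mult_left_mono)
    show "Cy * t * (X + Y) \<le> (Nx + Ny) * Y"
      using order_trans[OF mult_right_mono[OF Ny_ge] drop] XY_pos by simp
  qed (use Z_nonneg in simp)
  finally have "Nz * (X + Y) * Y \<le> Z * (Nx + Ny) * Y"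
    by (simp add: algebra_simps)
  then show ?thesis
    using Y_pos by simp
qed

lemma max0_mediant_le:
  fixes N D M Z :: real
  assumes "0 < D" "0 \<le> Z" "M \<le> 0 \<or> M * D \<le> Z * N"
  shows "max 0 ((N + M) / (D + Z)) \<le> max 0 (N / D)"
proof (cases "M \<le> 0")
  case True
  show ?thesis
  proof (cases "0 \<le> N")
    case N: True
    have "(N + M) / (D + Z) \<le> N / (D + Z)"
      using True assms by (simp add: divide_right_mono)
    also have "\<dots> \<le> N / D"
      using N assms by (simp add: frac_le)
    finally show ?thesis by simp
  next
    case False
    then have "(N + M) / (D + Z) \<le> 0"
      using True assms by (simp add: divide_nonpos_pos)
    then show ?thesis by simp
  qed
next
  case False
  then have "(N + M) / (D + Z) \<le> N / D"
    using assms by (simp add: divide_simps algebra_simps)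
  then show ?thesis by simp
qed

lemma cost_cross_le_of_J_append_less:
  fixes x y :: "nat list" and w c :: "nat \<Rightarrow> real"
  defines "X \<equiv> sum_list (map w x)" and "Y \<equiv> sum_list (map w y)"
    and "Nx \<equiv> search_cost w c x 1" and "Ny \<equiv> search_cost w c y (1 - sum_list (map w x))"
  assumes nonneg_x: "\<forall>v\<in>set x. 0 \<le> w v \<and> 0 \<le> c v"
    and drop: "J (x @ y) w c < J x w c"
  shows "0 < X + Y" and "Ny * (X + Y) \<le> (Nx + Ny) * Y"
proof -
  have J_xy: "J (x @ y) w c = (if 0 < X + Y then ereal ((Nx + Ny) / (X + Y)) else \<infinity>)"
    unfolding J_eq_search_cost X_def Y_def Nx_def Ny_def by (simp add: search_cost_append)
  show XY_pos: "0 < X + Y"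
    using drop J_xy by (auto split: if_splits)
  have X_nonneg: "0 \<le> X"
    unfolding X_def using nonneg_x by (intro sum_list_nonneg) auto
  show "Ny * (X + Y) \<le> (Nx + Ny) * Y"
  proof (cases "X = 0")
    case True
    have "0 \<le> sum_list (map c x)"
      using nonneg_x by (intro sum_list_nonneg) auto
    then have "0 \<le> Nx"
      using search_cost_ge[OF nonneg_x, of 1] True unfolding Nx_def X_def by simp
    then show ?thesis
      using True XY_pos by (simp add: algebra_simps)
  next
    case False
    then have "(Nx + Ny) / (X + Y) < Nx / X"
      using drop XY_pos X_nonneg J_xy
      by (simp add: J_eq_search_cost X_def Nx_def)
    then have "(Nx + Ny) * X < Nx * (X + Y)"
      using False X_nonneg XY_pos by (simp add: divide_simps mult.commute)
    then show ?thesis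
      by (simp add: algebra_simps)
  qed
qed

lemma Jplus_append_le_of_J_append_less:
  fixes x y z :: "nat list"
  assumes "\<forall>v\<in>set (x @ y @ z). 0 \<le> w v \<and> 0 < c v"
    and "distinct y" "distinct z"
    and "rho y w c \<le> rho z w c"
    and "J (x @ y) w c < J x w c"
  shows "Jplus (x @ y @ z) w c \<le> Jplus (x @ y) w c"
proof -
  define X where "X = sum_list (map w x)"
  define Y where "Y = sum_list (map w y)"
  define Z where "Z = sum_list (map w z)"
  define Cy where "Cy = sum_list (map c y)"
  define Cz where "Cz = sum_list (map c z)"
  define Nx where "Nx = search_cost w c x 1"
  define Ny where "Ny = search_cost w c y (1 - X)"
  define Nz where "Nz = search_cost w c z (1 - X - Y)"
  have nonneg_x: "\<forall>v\<in>set x. 0 \<le> w v \<and> 0 \<le> c v"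
    and nonneg_y: "\<forall>v\<in>set y. 0 \<le> w v \<and> 0 \<le> c v"
    and nonneg_z: "\<forall>v\<in>set z. 0 \<le> w v \<and> 0 \<le> c v"
    using assms(1) by (auto intro: less_imp_le)
  note cross = cost_cross_le_of_J_append_less[OF nonneg_x assms(5), folded X_def, folded Y_def Nx_def Ny_def]
  have "y \<noteq> []"
    using assms(5) by auto
  then have Cy_pos: "0 < Cy"
    using assms(1,2) unfolding Cy_def by (simp add: sum_list_distinct_conv_sum_set sum_pos)
  have "0 \<le> Z" "0 \<le> Y" "0 \<le> Cz"
    using nonneg_y nonneg_z unfolding Y_def Z_def Cz_def by (auto intro!: sum_list_nonneg)
  moreover have "Cy * (1 - X - Y) \<le> Ny"
    using search_cost_ge[OF nonneg_y, of "1 - X"] by (simp add: Cy_def Ny_def Y_def algebra_simps)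
  moreover have "Nz \<le> Cz * (1 - X - Y)"
    using search_cost_le[OF nonneg_z] by (simp add: Cz_def Nz_def)
  moreover have "Y * Cz \<le> Z * Cy"
    using weight_cross_le_of_rho_le[OF assms(2,3) _ assms(4)] assms(1)
    unfolding Y_def Z_def Cy_def Cz_def by simp
  ultimately have "Nz \<le> 0 \<or> Nz * (X + Y) \<le> Z * (Nx + Ny)"
    using tail_cost_cross_le cross Cy_pos by blast
  then have "max 0 ((Nx + Ny + Nz) / (X + Y + Z)) \<le> max 0 ((Nx + Ny) / (X + Y))"
    by (rule max0_mediant_le[OF cross(1) \<open>0 \<le> Z\<close>])
  moreover have "J (x @ y) w c = ereal ((Nx + Ny) / (X + Y))"
    using cross(1) by (simp add: J_eq_search_cost search_cost_append X_def Y_def Nx_def Ny_def)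
  moreover have "J (x @ y @ z) w c = ereal ((Nx + Ny + Nz) / (X + Y + Z))"
    using cross(1) \<open>0 \<le> Z\<close>
    by (simp add: J_eq_search_cost search_cost_append X_def Y_def Z_def Nx_def Ny_def Nz_def
        add.assoc diff_diff_eq)
  ultimately show ?thesis
    unfolding Jplus_def by (simp add: max_def split: if_splits)
qed

theorem proposition2:
  fixes n :: nat and E :: "(nat \<times> nat) set" and w c :: "nat \<Rightarrow> real"
    and x y z :: "nat list"
  assumes "is_dag n E"
    and "\<forall>i\<in>{1..n}. w i \<ge> 0"
    and "\<forall>i\<in>{1..n}. c i > 0"
    and "is_search n E (x @ y)"
    and "is_search n E (x @ y @ z)"
    and "rho z w c \<ge> rho y w c"
  shows "Jplus (x @ y) w c \<ge> min (Jplus x w c) (Jplus (x @ y @ z) w c)"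
proof (cases "J x w c \<le> J (x @ y) w c")
  case True
  then have "Jplus x w c \<le> Jplus (x @ y) w c"
    unfolding Jplus_def by (rule max.mono[OF order.refl])
  then show ?thesis
    by (simp add: min.coboundedI1)
next
  case False
  \<comment> \<open>Of the search hypotheses only distinctness and the vertex range of \<open>xyz\<close> matter.\<close>
  have "distinct (x @ y @ z)" "set (x @ y @ z) \<subseteq> {1..n}"
    using assms(5) unfolding is_search_def by auto
  then have "Jplus (x @ y @ z) w c \<le> Jplus (x @ y) w c"
    using assms(2,3,6) False
    by (intro Jplus_append_le_of_J_append_less) (auto simp: not_le)
  then show ?thesis
    by (simp add: min.coboundedI2)
qed

end
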